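(* If a graph $G$ contains a path on $k$ vertices as a subgraph for every $k\in\mathbb{N}$, then $G$ is $\omega$-evadible.
   Context: Cat Herding is played on a simple, possibly infinite graph $G$. The cat first places its token on a vertex. Then the players alternate, the herder moving first: the herder deletes one edge of the current graph, and then, unless the cat's current vertex has degree $0$ in the current graph, the cat moves its token along a finite path with at least one edge in the current graph to a different vertex. The cat is captured when its vertex has degree $0$ in the current graph. $G$ is $k$-evadible if the cat has a strategy (including its choice of starting vertex) that, against every herder strategy, yields a legal cat move after each of the first $k-1$ edge deletions; $G$ is $\omega$-evadible if it is $k$-evadible for every $k\in\mathbb{N}$. *)

theory Defs
  imports Main
begin

definition simple_graph :: "'a set \<Rightarrow> 'a set set \<Rightarrow> bool" where
  "simple_graph V E \<longleftrightarrow> (\<forall>e\<in>E. \<exists>x y. x \<noteq> y \<and> e = {x, y} \<and> x \<in> V \<and> y \<in> V)"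

definition adj :: "'a set set \<Rightarrow> ('a \<times> 'a) set" where
  "adj E = {(x, y). x \<noteq> y \<and> {x, y} \<in> E}"

text \<open>cat_survives n E v: the cat, sitting on v in current graph with edge set E,
  can make a legal move after each of the next n edge deletions, whatever the herder does.
  A legal move: along a finite path (of at least one edge) of the current graph to a
  different vertex; equivalently w differs from v and is reachable from v by a walk
  with at least one edge. If v has degree 0 no such move exists (capture).\<close>
fun cat_survives :: "nat \<Rightarrow> 'a set set \<Rightarrow> 'a \<Rightarrow> bool" where
  "cat_survives 0 E v = True"
| "cat_survives (Suc n) E v =
     (\<forall>e\<in>E. \<exists>w. w \<noteq> v \<and> (v, w) \<in> (adj (E - {e}))\<^sup>+ \<and> cat_survives n (E - {e}) w)"

definition evadible :: "nat \<Rightarrow> 'a set \<Rightarrow> 'a set set \<Rightarrow> bool" where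
  "evadible k V E \<longleftrightarrow> (\<exists>v\<in>V. cat_survives (k - 1) E v)"

definition omega_evadible :: "'a set \<Rightarrow> 'a set set \<Rightarrow> bool" where
  "omega_evadible V E \<longleftrightarrow> (\<forall>k. evadible k V E)"

definition contains_path :: "'a set \<Rightarrow> 'a set set \<Rightarrow> nat \<Rightarrow> bool" where
  "contains_path V E k \<longleftrightarrow> (\<exists>f. inj_on f {..<k} \<and> f ` {..<k} \<subseteq> V \<and>
      (\<forall>i. Suc i < k \<longrightarrow> {f i, f (Suc i)} \<in> E))"

end

theory Submission
  imports Defs
begin

text \<open>The cat starts in the middle of a path on \<open>2^(n+1) - 1\<close> vertices, with \<open>2^n - 1\<close>
  vertices on either side. Deleting an edge leaves the cat on a subpath that still contains one
  full side together with its own vertex, hence at least \<open>2^n\<close> vertices; the cat moves along it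
  to one of the two middle vertices of its first \<open>2^n\<close> vertices (two candidates, so one differs
  from its current vertex), where it again has \<open>2^(n-1) - 1\<close> vertices on either side, and the
  argument repeats.\<close>

text \<open>\<open>survival_radius n = 2^n - 1\<close>.\<close>
fun survival_radius :: "nat \<Rightarrow> nat" where
  "survival_radius 0 = 0"
| "survival_radius (Suc n) = 2 * survival_radius n + 1"

definition path_seg :: "'a set set \<Rightarrow> (nat \<Rightarrow> 'a) \<Rightarrow> nat \<Rightarrow> nat \<Rightarrow> bool" where
  "path_seg E f a b \<longleftrightarrow> inj_on f {a..b} \<and> (\<forall>t. a \<le> t \<longrightarrow> t < b \<longrightarrow> {f t, f (Suc t)} \<in> E)"

lemma sym_adj: "sym (adj E)"
  unfolding sym_def adj_def by (auto simp: insert_commute)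

lemma path_seg_adj:
  assumes "path_seg E f a b" "a \<le> t" "t < b"
  shows "(f t, f (Suc t)) \<in> adj E"
proof -
  have "inj_on f {a..b}" and edge: "{f t, f (Suc t)} \<in> E"
    using assms unfolding path_seg_def by auto
  then have "f t \<noteq> f (Suc t)"
    using assms(2,3) by (simp add: inj_on_eq_iff)
  with edge show ?thesis by (simp add: adj_def)
qed

lemma path_seg_trancl_forward:
  assumes "path_seg E f a b" "a \<le> s" "s < t" "t \<le> b"
  shows "(f s, f t) \<in> (adj E)\<^sup>+"
  using Suc_leI[OF assms(3)] assms(4)
proof (induction t rule: dec_induct)
  case base
  show ?case using path_seg_adj[OF assms(1,2)] assms(3,4) by auto
next
  case (step t)
  then have "(f t, f (Suc t)) \<in> adj E"
    using path_seg_adj[OF assms(1)] assms(2,3) by simp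
  with step show ?case by (simp add: trancl_into_trancl)
qed

lemma path_seg_trancl:
  assumes "path_seg E f a b" "s \<in> {a..b}" "t \<in> {a..b}" "s \<noteq> t"
  shows "(f s, f t) \<in> (adj E)\<^sup>+"
proof (cases "s < t")
  case True
  with assms show ?thesis by (intro path_seg_trancl_forward[of E f a b]) auto
next
  case False
  with assms have "(f t, f s) \<in> (adj E)\<^sup>+" by (intro path_seg_trancl_forward[of E f a b]) auto
  then show ?thesis by (rule symD[OF sym_trancl[OF sym_adj]])
qed

lemma path_seg_edge_inj:
  assumes "path_seg E f a b" "a \<le> t" "t < b" "a \<le> q" "q < b"
    and "{f t, f (Suc t)} = {f q, f (Suc q)}"
  shows "t = q"
proof -
  have inj: "inj_on f {a..b}" using assms(1) unfolding path_seg_def by blast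
  have "f t = f q \<or> f t = f (Suc q)" "f (Suc t) = f q \<or> f (Suc t) = f (Suc q)"
    using assms(6) by (auto simp: doubleton_eq_iff)
  then have "t = q \<or> t = Suc q" "Suc t = q \<or> Suc t = Suc q"
    using assms(2-5) by (auto simp: inj_on_eq_iff[OF inj])
  then show ?thesis by auto
qed

lemma path_seg_restrict:
  assumes "path_seg E f a b" "a \<le> a'" "b' \<le> b"
    and "\<forall>t. a' \<le> t \<longrightarrow> t < b' \<longrightarrow> {f t, f (Suc t)} \<noteq> e"
  shows "path_seg (E - {e}) f a' b'"
proof -
  have "{a'..b'} \<subseteq> {a..b}" using assms(2,3) by auto
  then have "inj_on f {a'..b'}" using assms(1) unfolding path_seg_def by (blast intro: inj_on_subset)
  with assms show ?thesis unfolding path_seg_def by auto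
qed

lemma path_seg_delete_edge:
  assumes "path_seg E f i j" "i \<le> p" "p \<le> j"
  obtains a b where "path_seg (E - {e}) f a b" "i \<le> a" "a \<le> p" "p \<le> b" "b \<le> j"
    "a = i \<or> b = j"
proof (cases "\<exists>q. i \<le> q \<and> q < j \<and> e = {f q, f (Suc q)}")
  case False
  then have "path_seg (E - {e}) f i j" by (intro path_seg_restrict[OF assms(1)]) auto
  with assms(2,3) show ?thesis by (intro that[of i j]) auto
next
  case True
  then obtain q where q: "i \<le> q" "q < j" "e = {f q, f (Suc q)}" by blast
  have other_edges: "{f t, f (Suc t)} \<noteq> e" if "i \<le> t" "t < j" "t \<noteq> q" for t
    using path_seg_edge_inj[OF assms(1) that(1,2) q(1,2)] q(3) that(3) by blast
  show ?thesis
  proof (cases "p \<le> q")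
    case True
    have "path_seg (E - {e}) f i q"
      using q(2) other_edges by (intro path_seg_restrict[OF assms(1)]) auto
    with True assms(2) q(2) show ?thesis by (intro that[of i q]) auto
  next
    case False
    have "path_seg (E - {e}) f (Suc q) j"
      using q(1) other_edges by (intro path_seg_restrict[OF assms(1)]) auto
    with False assms(3) q(1) show ?thesis by (intro that[of "Suc q" j]) auto
  qed
qed

lemma path_seg_move_to_middle:
  assumes "path_seg E f a b" "a + 2 * r + 1 \<le> b" "p \<in> {a..b}"
    and "\<And>q. a + r \<le> q \<Longrightarrow> q + r \<le> b \<Longrightarrow> P (f q)"
  shows "\<exists>w. w \<noteq> f p \<and> (f p, w) \<in> (adj E)\<^sup>+ \<and> P w"
proof -
  define q where "q = (if p = a + r then a + r + 1 else a + r)"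
  have q: "q \<in> {a..b}" "q \<noteq> p" "a + r \<le> q" "q + r \<le> b"
    using assms(2) by (auto simp: q_def)
  have "inj_on f {a..b}" using assms(1) unfolding path_seg_def by blast
  then have "f q \<noteq> f p" using q(1,2) assms(3) by (simp add: inj_on_eq_iff)
  moreover have "(f p, f q) \<in> (adj E)\<^sup>+"
    using path_seg_trancl[OF assms(1,3) q(1)] q(2) by blast
  ultimately show ?thesis using assms(4)[OF q(3,4)] by blast
qed

lemma cat_survives_on_path_seg:
  assumes "path_seg E f i j" "i + survival_radius n \<le> p" "p + survival_radius n \<le> j"
  shows "cat_survives n E (f p)"
  using assms
proof (induction n arbitrary: E i j p)
  case 0
  show ?case by simp
next
  case (Suc n)
  let ?r = "survival_radius n"
  have p: "i \<le> p" "p \<le> j" using Suc.prems(2,3) by simp_all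
  show ?case unfolding cat_survives.simps
  proof
    fix e
    obtain a b where ab: "path_seg (E - {e}) f a b" "i \<le> a" "a \<le> p" "p \<le> b" "b \<le> j"
        "a = i \<or> b = j"
      by (rule path_seg_delete_edge[OF Suc.prems(1) p])
    have "a + 2 * ?r + 1 \<le> b" using ab(3,4,6) Suc.prems(2,3) by auto
    moreover have "p \<in> {a..b}" using ab(3,4) by simp
    moreover have "cat_survives n (E - {e}) (f q)" if "a + ?r \<le> q" "q + ?r \<le> b" for q
      using Suc.IH[OF ab(1) that] .
    ultimately show "\<exists>w. w \<noteq> f p \<and> (f p, w) \<in> (adj (E - {e}))\<^sup>+ \<and> cat_survives n (E - {e}) w"
      by (rule path_seg_move_to_middle[OF ab(1)])
  qed
qed

theorem mainTheorem16:
  fixes V :: "'a set" and E :: "'a set set"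
  assumes "simple_graph V E"
    and "\<forall>k. contains_path V E k"
  shows "omega_evadible V E"
  unfolding omega_evadible_def evadible_def
proof
  fix k
  let ?r = "survival_radius (k - 1)"
  obtain f where f: "inj_on f {..<2 * ?r + 1}" "f ` {..<2 * ?r + 1} \<subseteq> V"
      "\<forall>i. Suc i < 2 * ?r + 1 \<longrightarrow> {f i, f (Suc i)} \<in> E"
    using assms(2) unfolding contains_path_def by blast
  have "{0..2 * ?r} = {..<2 * ?r + 1}" by auto
  with f have "path_seg E f 0 (2 * ?r)" unfolding path_seg_def by auto
  then have "cat_survives (k - 1) E (f ?r)" by (rule cat_survives_on_path_seg) auto
  moreover have "f ?r \<in> V" using f(2) by auto
  ultimately show "\<exists>v\<in>V. cat_survives (k - 1) E v" by blast
qed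

end
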